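(* Let $n\ge1$. Every $n$-normal operator $T\in\mathcal{L}(\mathcal{H})$ with closed range is $n$-EP.
   Context: $\mathcal{H}$ is a Hilbert space, $\mathcal{L}(\mathcal{H})$ the bounded operators on it. $T$ is $n$-normal if $T^nT^*=T^*T^n$. For $T$ with closed range, $T^\dagger$ is its Moore–Penrose inverse (unique solution of $TT^\dagger T=T$, $T^\dagger TT^\dagger=T^\dagger$, $(T^\dagger T)^*=T^\dagger T$, $(TT^\dagger)^*=TT^\dagger$). $T$ is $n$-EP if $T$ has closed range and $T^nT^\dagger=T^\dagger T^n$. *)

theory Defs
  imports "HOL-Analysis.Analysis"
begin

text \<open>Complex Hilbert spaces: the library only provides real inner product spaces,
so we introduce a class of complete complex inner product spaces whose norm is
induced by the inner product (linear in the second argument, conjugate linear in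
the first).\<close>

class chilbert = banach +
  fixes cscale :: "complex \<Rightarrow> 'a \<Rightarrow> 'a"
    and cinner :: "'a \<Rightarrow> 'a \<Rightarrow> complex"
  assumes cscale_of_real: "cscale (complex_of_real r) x = scaleR r x"
    and cscale_add_right: "cscale a (x + y) = cscale a x + cscale a y"
    and cscale_add_left: "cscale (a + b) x = cscale a x + cscale b x"
    and cscale_mult: "cscale (a * b) x = cscale a (cscale b x)"
    and cinner_cnj: "cinner x y = cnj (cinner y x)"
    and cinner_add_left: "cinner (x + y) z = cinner x z + cinner y z"
    and cinner_cscale_left: "cinner (cscale a x) y = cnj a * cinner x y"
    and cinner_norm: "cinner x x = complex_of_real ((norm x)\<^sup>2)"

definition bounded_clinear :: "('a::chilbert \<Rightarrow> 'b::chilbert) \<Rightarrow> bool" where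
  "bounded_clinear T \<longleftrightarrow>
     (\<forall>x y. T (x + y) = T x + T y) \<and>
     (\<forall>a x. T (cscale a x) = cscale a (T x)) \<and>
     (\<exists>K. \<forall>x. norm (T x) \<le> norm x * K)"

definition adj :: "('a::chilbert \<Rightarrow> 'a) \<Rightarrow> ('a \<Rightarrow> 'a)" where
  "adj T = (THE S. \<forall>x y. cinner (T x) y = cinner x (S y))"

definition mp_inv :: "('a::chilbert \<Rightarrow> 'a) \<Rightarrow> ('a \<Rightarrow> 'a)" where
  "mp_inv T = (THE S. bounded_clinear S \<and> T \<circ> S \<circ> T = T \<and> S \<circ> T \<circ> S = S \<and>
                       adj (S \<circ> T) = S \<circ> T \<and> adj (T \<circ> S) = T \<circ> S)"

definition n_normal :: "nat \<Rightarrow> ('a::chilbert \<Rightarrow> 'a) \<Rightarrow> bool" where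
  "n_normal n T \<longleftrightarrow> (T ^^ n) \<circ> adj T = adj T \<circ> (T ^^ n)"

definition n_EP :: "nat \<Rightarrow> ('a::chilbert \<Rightarrow> 'a) \<Rightarrow> bool" where
  "n_EP n T \<longleftrightarrow> closed (range T) \<and> (T ^^ n) \<circ> mp_inv T = mp_inv T \<circ> (T ^^ n)"

end

theory Submission
  imports Defs
begin

text \<open>For \<open>T\<close> with closed range the Moore--Penrose inverse \<open>T\<^sup>\<dagger>\<close> exists: \<open>T\<close> maps the
orthogonal complement of its kernel bijectively onto its closed range, and inverting this
restriction after projecting onto the range gives an operator that is bounded by the open
mapping argument (Baire category). Then \<open>T T\<^sup>\<dagger>\<close> and \<open>T\<^sup>\<dagger> T\<close> are the orthogonal projections
onto \<open>R(T)\<close> and \<open>R(T\<^sup>*)\<close>. An operator \<open>A\<close> commuting with \<open>T\<close> and \<open>T\<^sup>*\<close> leaves these ranges and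
their complements \<open>N(T\<^sup>*)\<close>, \<open>N(T)\<close> invariant, so it commutes with both projections, and hence
\<open>A T\<^sup>\<dagger> = A T\<^sup>\<dagger> T T\<^sup>\<dagger> = T\<^sup>\<dagger> T A T\<^sup>\<dagger> = T\<^sup>\<dagger> A T T\<^sup>\<dagger> = T\<^sup>\<dagger> T T\<^sup>\<dagger> A = T\<^sup>\<dagger> A\<close>.
For \<open>A = T\<^sup>n\<close>, commuting with \<open>T\<^sup>*\<close> is exactly \<open>n\<close>-normality.\<close>

section \<open>Complex inner product spaces\<close>

lemma cinner_add_right: "cinner x (y + z) = cinner x y + cinner x z"
  by (metis cinner_cnj cinner_add_left complex_cnj_add)

lemma cinner_cscale_right: "cinner x (cscale a y) = a * cinner x y"
  by (metis cinner_cnj cinner_cscale_left complex_cnj_mult complex_cnj_cnj)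

lemma cinner_zero_left [simp]: "cinner 0 y = 0"
  by (metis add_cancel_right_right add_0 cinner_add_left)

lemma cinner_zero_right [simp]: "cinner x 0 = 0"
  by (metis cinner_cnj cinner_zero_left complex_cnj_zero)

lemma cinner_minus_left: "cinner (- x) y = - cinner x y"
  by (metis add_eq_0_iff cinner_add_left cinner_zero_left neg_eq_iff_add_eq_0)

lemma cinner_minus_right: "cinner x (- y) = - cinner x y"
  by (metis add_eq_0_iff cinner_add_right cinner_zero_right neg_eq_iff_add_eq_0)

lemma cinner_diff_left: "cinner (x - y) z = cinner x z - cinner y z"
  by (metis diff_conv_add_uminus cinner_add_left cinner_minus_left)

lemma cinner_diff_right: "cinner x (y - z) = cinner x y - cinner x z"
  by (metis diff_conv_add_uminus cinner_add_right cinner_minus_right)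

lemma cinner_eq_zero_commute: "cinner x y = 0 \<longleftrightarrow> cinner y x = 0"
  by (metis cinner_cnj complex_cnj_zero_iff)

lemma cinner_self_eq_0 [simp]: "cinner x x = 0 \<longleftrightarrow> x = 0"
  by (simp add: cinner_norm)

lemma cinner_ext: "(\<And>x. cinner x a = cinner x b) \<Longrightarrow> a = b"
  by (metis cinner_diff_right cinner_self_eq_0 eq_iff_diff_eq_0)

lemma cscale_zero_right [simp]: "cscale a 0 = 0"
  by (metis add_cancel_right_right cscale_add_right add_0)

lemma cscale_diff_right: "cscale a (x - y) = cscale a x - cscale a y"
  by (metis add_diff_cancel cscale_add_right diff_add_cancel)

lemma power2_norm_eq_cinner: "(norm x)\<^sup>2 = Re (cinner x x)"
  by (simp add: cinner_norm)

lemma power2_norm_add: "(norm (x + y))\<^sup>2 = (norm x)\<^sup>2 + (norm y)\<^sup>2 + 2 * Re (cinner x y)"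
proof -
  have "Re (cinner y x) = Re (cinner x y)"
    by (metis cinner_cnj cnj.sel(1))
  thus ?thesis by (simp add: power2_norm_eq_cinner cinner_add_left cinner_add_right)
qed

lemma power2_norm_diff: "(norm (x - y))\<^sup>2 = (norm x)\<^sup>2 + (norm y)\<^sup>2 - 2 * Re (cinner x y)"
  using power2_norm_add[of x "- y"] by (simp add: cinner_minus_right)

lemma cauchy_schwarz: "cmod (cinner x y) \<le> norm x * norm y"
proof (cases "y = 0")
  case True thus ?thesis by simp
next
  case False
  define c where "c = cinner y x"
  define n where "n = (norm y)\<^sup>2"
  have n: "n > 0" using False by (simp add: n_def)
  define t where "t = c / of_real n"
  have cyy: "cinner y y = of_real n" by (simp add: n_def cinner_norm)
  have cxy: "cinner x y = cnj c" by (simp add: c_def cinner_cnj[of x y])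
  have "cinner (x - cscale t y) (x - cscale t y)
      = cinner x x - t * cnj c - cnj t * c + cnj t * t * of_real n"
    by (simp add: cinner_diff_left cinner_diff_right cinner_cscale_left cinner_cscale_right
        cxy cyy c_def algebra_simps)
  also have "\<dots> = cinner x x - c * cnj c / of_real n"
    using n by (simp add: t_def field_simps)
  finally have "0 \<le> Re (cinner x x - c * cnj c / of_real n)"
    by (metis power2_norm_eq_cinner zero_le_power2)
  hence "(cmod c)\<^sup>2 / n \<le> (norm x)\<^sup>2"
    by (simp add: power2_norm_eq_cinner complex_mult_cnj cmod_power2 del: of_real_power)
  hence "(cmod c)\<^sup>2 \<le> (norm x * norm y)\<^sup>2"
    using n by (simp add: n_def field_simps)
  hence "cmod c \<le> norm x * norm y" by (rule power2_le_imp_le) simp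
  thus ?thesis by (simp add: cxy)
qed

lemma norm_cscale: "norm (cscale a x) = cmod a * norm x"
proof -
  have "(norm (cscale a x))\<^sup>2 = Re (cnj a * a * cinner x x)"
    by (simp only: power2_norm_eq_cinner cinner_cscale_left cinner_cscale_right ac_simps)
  also have "\<dots> = (cmod a * norm x)\<^sup>2"
    by (simp add: cinner_norm complex_mult_cnj[of a, unfolded mult.commute[of a]] power_mult_distrib
        cmod_power2 del: of_real_power)
  finally show ?thesis by simp
qed

section \<open>Bounded complex-linear operators\<close>

lemma bounded_clinear_add: "bounded_clinear T \<Longrightarrow> T (x + y) = T x + T y"
  by (simp add: bounded_clinear_def)

lemma bounded_clinear_cscale: "bounded_clinear T \<Longrightarrow> T (cscale a x) = cscale a (T x)"
  by (simp add: bounded_clinear_def)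

lemma bounded_clinear_imp_bounded_linear: "bounded_clinear T \<Longrightarrow> bounded_linear T"
  unfolding bounded_clinear_def
  by (metis bounded_linear_intro cscale_of_real)

lemma bounded_clinear_diff: "bounded_clinear T \<Longrightarrow> T (x - y) = T x - T y"
  by (metis bounded_clinear_imp_bounded_linear bounded_linear.linear linear_diff)

lemma bounded_clinear_zero: "bounded_clinear T \<Longrightarrow> T 0 = 0"
  by (metis bounded_clinear_imp_bounded_linear bounded_linear.linear linear_0)

lemma bounded_clinear_compose:
  assumes S: "bounded_clinear S" and T: "bounded_clinear T"
  shows "bounded_clinear (S \<circ> T)"
proof -
  obtain K1 K2 where K1: "\<And>x. norm (S x) \<le> norm x * K1" and K2: "\<And>x. norm (T x) \<le> norm x * K2"
    using S T unfolding bounded_clinear_def by blast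
  have "norm (S (T x)) \<le> norm x * (K2 * max K1 0)" for x
  proof -
    have "norm (S (T x)) \<le> norm (T x) * max K1 0"
      using K1[of "T x"] by (smt (verit) max.cobounded1 mult_left_mono norm_ge_zero)
    also have "\<dots> \<le> norm x * K2 * max K1 0" using K2 by (intro mult_right_mono) auto
    finally show ?thesis by (simp add: mult.assoc)
  qed
  thus ?thesis using S T unfolding bounded_clinear_def by auto
qed

lemma bounded_clinear_id: "bounded_clinear id"
  unfolding bounded_clinear_def by (auto intro!: exI[of _ 1])

lemma bounded_clinear_funpow:
  fixes T :: "'a::chilbert \<Rightarrow> 'a"
  shows "bounded_clinear T \<Longrightarrow> bounded_clinear (T ^^ n)"
  by (induction n) (simp_all add: bounded_clinear_id bounded_clinear_compose)

section \<open>Bounded preimages for operators with closed range\<close>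

lemma geometric_bound_summable:
  fixes xs :: "nat \<Rightarrow> 'a::banach"
  assumes bound: "\<And>k. norm (xs k) \<le> c * (1/2)^k"
  shows "summable xs" "norm (suminf xs) \<le> 2 * c"
proof -
  have sg: "summable (\<lambda>k. c * (1/2::real)^k)"
    by (intro summable_mult summable_geometric) simp
  have sn: "summable (\<lambda>k. norm (xs k))"
    by (rule summable_comparison_test'[OF sg]) (use bound in simp)
  show "summable xs" by (rule summable_norm_cancel[OF sn])
  have "norm (suminf xs) \<le> (\<Sum>k. norm (xs k))" by (rule summable_norm[OF sn])
  also have "\<dots> \<le> (\<Sum>k. c * (1/2::real)^k)" by (rule suminf_le[OF _ sn sg]) (use bound in simp)
  also have "\<dots> = 2 * c" by (simp add: suminf_mult suminf_geometric)
  finally show "norm (suminf xs) \<le> 2 * c" .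
qed

lemma telescoping_preimage:
  fixes T :: "'a::banach \<Rightarrow> 'b::real_normed_vector"
  assumes lin: "bounded_linear T" and xs: "summable xs" and ys: "ys \<longlonglongrightarrow> 0"
    and step: "\<And>k. ys (Suc k) = ys k - T (xs k)"
  shows "T (suminf xs) = ys 0"
proof -
  have "(\<lambda>k. T (xs k)) sums T (suminf xs)"
    by (rule bounded_linear.sums[OF lin]) (use xs in \<open>simp add: summable_sums\<close>)
  moreover have "(\<lambda>k. ys k - ys (Suc k)) sums (ys 0 - 0)" by (rule telescope_sums'[OF ys])
  ultimately show ?thesis by (simp add: step sums_unique2)
qed

text \<open>Successive approximation: correcting the residual again and again, the corrections form a
geometric series whose sum is an exact preimage.\<close>

lemma approximate_preimages_imp_bounded_preimages:
  fixes T :: "'a::banach \<Rightarrow> 'b::real_normed_vector"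
  assumes lin: "bounded_linear T"
    and approx: "\<And>y. y \<in> range T \<Longrightarrow> \<exists>x. norm x \<le> C * norm y \<and> norm (y - T x) \<le> norm y / 2"
    and y: "y \<in> range T"
  shows "\<exists>x. T x = y \<and> norm x \<le> 2 * C * norm y"
proof (cases "y = 0")
  case True
  thus ?thesis using bounded_linear.linear[OF lin] linear_0 by (intro exI[of _ 0]) fastforce
next
  case False
  have L: "linear T" using lin bounded_linear.linear by blast
  obtain g where g: "\<And>y. y \<in> range T \<Longrightarrow> norm (g y) \<le> C * norm y \<and> norm (y - T (g y)) \<le> norm y / 2"
    using approx by metis
  have C: "C \<ge> 0"
    using g[OF y] False by (smt (verit) norm_ge_zero zero_less_norm_iff zero_le_mult_iff)
  define ys where "ys = rec_nat y (\<lambda>_ z. z - T (g z))"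
  have ys0: "ys 0 = y" and ysS: "ys (Suc k) = ys k - T (g (ys k))" for k
    by (simp_all add: ys_def)
  have ys_range: "ys k \<in> range T" for k
  proof (induction k)
    case 0 thus ?case using y ys0 by simp
  next
    case (Suc k)
    then obtain a where "ys k = T a" by blast
    hence "ys (Suc k) = T (a - g (ys k))" using ysS linear_diff[OF L] by simp
    thus ?case by blast
  qed
  have ys_bound: "norm (ys k) \<le> norm y * (1/2)^k" for k
  proof (induction k)
    case 0 thus ?case by (simp add: ys0)
  next
    case (Suc k)
    have "norm (ys (Suc k)) \<le> norm (ys k) / 2" using g[OF ys_range[of k]] ysS by simp
    thus ?case using Suc by simp
  qed
  have xs_bound: "norm (g (ys k)) \<le> C * norm y * (1/2)^k" for k
    using g[OF ys_range[of k]] mult_left_mono[OF ys_bound[of k] C] by (simp add: mult.assoc)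
  note xs = geometric_bound_summable[OF xs_bound]
  have "ys \<longlonglongrightarrow> 0"
  proof (rule Lim_null_comparison)
    show "\<forall>\<^sub>F k in sequentially. norm (ys k) \<le> norm y * (1/2)^k" using ys_bound by simp
    show "(\<lambda>k. norm y * (1/2::real)^k) \<longlonglongrightarrow> 0"
      by (intro tendsto_mult_right_zero LIMSEQ_power_zero) simp
  qed
  hence "T (\<Sum>k. g (ys k)) = y" using telescoping_preimage[OF lin xs(1)] ysS ys0 by simp
  thus ?thesis using xs(2) by (intro exI[of _ "\<Sum>k. g (ys k)"]) (simp add: mult.assoc)
qed

text \<open>Baire category theorem, applied to the closed subsets \<open>range T \<inter> closure (T ` cball 0 k)\<close>
that cover the complete space \<open>range T\<close>.\<close>

lemma closed_range_image_ball_dense_somewhere: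
  fixes T :: "'a::real_normed_vector \<Rightarrow> 'b::banach"
  assumes L: "linear T" and cl: "closed (range T)"
  obtains e y0 k where "e > 0" "y0 \<in> range T"
    "\<And>z. z \<in> range T \<Longrightarrow> dist y0 z < e \<Longrightarrow> z \<in> closure (T ` cball 0 (real k))"
proof -
  define R where "R = range T"
  define F where "F k = R \<inter> closure (T ` cball 0 (real k))" for k :: nat
  have "\<exists>k. top_of_set R interior_of F k \<noteq> {}"
  proof (rule ccontr)
    assume "\<not> ?thesis"
    hence "top_of_set R interior_of \<Union>(range F) = {}"
      using completely_metrizable_space_closedin[OF completely_metrizable_space_euclidean]
        closed_closedin cl
      by (intro Baire_category_alt) (auto simp: R_def F_def closedin_closed_Int)
    moreover have "\<Union>(range F) = R"
    proof
      show "R \<subseteq> \<Union>(range F)"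
      proof
        fix z assume "z \<in> R"
        then obtain a where a: "z = T a" by (auto simp: R_def)
        obtain k :: nat where "norm a \<le> real k" using real_arch_simple by blast
        hence "z \<in> closure (T ` cball 0 (real k))" using a closure_subset by fastforce
        thus "z \<in> \<Union>(range F)" using \<open>z \<in> R\<close> by (auto simp: F_def)
      qed
    qed (auto simp: F_def)
    ultimately have "R = {}" by (metis interior_of_topspace topspace_euclidean_subtopology)
    thus False by (simp add: R_def)
  qed
  then obtain k y0 U where U: "openin (top_of_set R) U" "y0 \<in> U" "U \<subseteq> F k"
    by (auto simp: interior_of_def)
  then obtain e where "e > 0" "ball y0 e \<inter> R \<subseteq> U"
    by (auto simp: openin_contains_ball)
  moreover have "y0 \<in> R" using U openin_subset by fastforce
  moreover have "z \<in> closure (T ` cball 0 (real k))" if "z \<in> R" "dist y0 z < e" for z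
    using that U \<open>ball y0 e \<inter> R \<subseteq> U\<close> by (auto simp: F_def dist_commute)
  ultimately show ?thesis by (intro that[of e y0 k]) (auto simp: R_def)
qed

lemma approximate_preimage_near_zero:
  fixes T :: "'a::real_normed_vector \<Rightarrow> 'b::real_normed_vector"
  assumes L: "linear T" and y0: "y0 \<in> range T"
    and dense: "\<And>z. z \<in> range T \<Longrightarrow> dist y0 z < e \<Longrightarrow> z \<in> closure (T ` cball 0 r)"
    and y: "y \<in> range T" "norm y < e" and \<epsilon>: "\<epsilon> > 0"
  shows "\<exists>x. norm x \<le> 2 * r \<and> norm (y - T x) < \<epsilon>"
proof -
  have close: "\<exists>x. norm x \<le> r \<and> norm (z - T x) < \<epsilon>/2"
    if "z \<in> range T" "dist y0 z < e" for z
  proof -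
    have "z \<in> closure (T ` cball 0 r)" by (rule dense[OF that])
    then obtain w where "w \<in> T ` cball 0 r" "dist w z < \<epsilon>/2"
      using \<epsilon> unfolding closure_approachable by (meson half_gt_zero)
    thus ?thesis by (auto simp: dist_norm norm_minus_commute)
  qed
  obtain a b where ab: "y0 = T a" "y = T b" using y y0 by auto
  have "y0 + y \<in> range T" using ab linear_add[OF L] by (metis rangeI)
  moreover have "dist y0 (y0 + y) < e" using y by (simp add: dist_norm)
  ultimately obtain x1 where x1: "norm x1 \<le> r" "norm (y0 + y - T x1) < \<epsilon>/2"
    using close by blast
  have "dist y0 y0 < e" using order.strict_trans1[OF norm_ge_zero y(2)] by simp
  then obtain x2 where x2: "norm x2 \<le> r" "norm (y0 - T x2) < \<epsilon>/2"
    using close[OF y0] by blast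
  have "y - T (x1 - x2) = (y0 + y - T x1) - (y0 - T x2)"
    using linear_diff[OF L] by (simp add: algebra_simps)
  hence "norm (y - T (x1 - x2)) \<le> norm (y0 + y - T x1) + norm (y0 - T x2)"
    by (metis norm_triangle_ineq4)
  moreover have "norm (x1 - x2) \<le> 2 * r"
    using norm_triangle_ineq4[of x1 x2] x1 x2 by simp
  ultimately show ?thesis using x1 x2 by (intro exI[of _ "x1 - x2"]) simp
qed

lemma closed_range_approximate_preimages:
  fixes T :: "'a::real_normed_vector \<Rightarrow> 'b::banach"
  assumes L: "linear T" and cl: "closed (range T)"
  obtains C where "\<And>y. y \<in> range T \<Longrightarrow> \<exists>x. norm x \<le> C * norm y \<and> norm (y - T x) \<le> norm y / 2"
proof -
  obtain e y0 k where e: "e > 0" and y0: "y0 \<in> range T"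
    and dense: "\<And>z. z \<in> range T \<Longrightarrow> dist y0 z < e \<Longrightarrow> z \<in> closure (T ` cball 0 (real k))"
    using closed_range_image_ball_dense_somewhere[OF L cl] by blast
  have "\<exists>x. norm x \<le> (4 * real k / e) * norm y \<and> norm (y - T x) \<le> norm y / 2"
    if y: "y \<in> range T" for y
  proof (cases "y = 0")
    case True thus ?thesis using linear_0[OF L] by (intro exI[of _ 0]) simp
  next
    case False
    define s where "s = e / (2 * norm y)"
    have s: "s > 0" using False e by (simp add: s_def)
    have "s *\<^sub>R y \<in> range T" using y linear_scale[OF L] by (metis image_iff rangeI)
    moreover have "norm (s *\<^sub>R y) < e" using False e by (simp add: s_def)
    ultimately obtain x' where x': "norm x' \<le> 2 * real k" "norm (s *\<^sub>R y - T x') < e / 4"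
      using approximate_preimage_near_zero[OF L y0 dense] e by (metis divide_pos_pos zero_less_numeral)
    define x where "x = (1/s) *\<^sub>R x'"
    have "norm x \<le> (1/s) * (2 * real k)" using x' s by (simp add: x_def divide_right_mono)
    also have "\<dots> = (4 * real k / e) * norm y" using False e by (simp add: s_def field_simps)
    finally have norm_x: "norm x \<le> (4 * real k / e) * norm y" .
    have "y - T x = (1/s) *\<^sub>R (s *\<^sub>R y - T x')"
      using s linear_scale[OF L] by (simp add: x_def algebra_simps)
    hence "norm (y - T x) = norm (s *\<^sub>R y - T x') / s" using s by simp
    also have "\<dots> \<le> (e / 4) / s" using x'(2) s by (intro divide_right_mono) auto
    finally have "norm (y - T x) \<le> (e / 4) / s" .
    thus ?thesis using norm_x False e by (intro exI[of _ x]) (simp add: s_def field_simps)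
  qed
  thus ?thesis using that by blast
qed

lemma closed_range_bounded_preimages:
  fixes T :: "'a::banach \<Rightarrow> 'b::banach"
  assumes lin: "bounded_linear T" and cl: "closed (range T)"
  obtains C where "\<And>y. y \<in> range T \<Longrightarrow> \<exists>x. T x = y \<and> norm x \<le> C * norm y"
  using closed_range_approximate_preimages[OF bounded_linear.linear[OF lin] cl]
    approximate_preimages_imp_bounded_preimages[OF lin] by metis

section \<open>Orthogonal projections onto closed subspaces\<close>

definition csubspace :: "'a::chilbert set \<Rightarrow> bool" where
  "csubspace M \<longleftrightarrow> 0 \<in> M \<and> (\<forall>x\<in>M. \<forall>y\<in>M. x + y \<in> M) \<and> (\<forall>a. \<forall>x\<in>M. cscale a x \<in> M)"

definition corthogonal_comp :: "'a::chilbert set \<Rightarrow> 'a set" where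
  "corthogonal_comp M = {v. \<forall>m\<in>M. cinner m v = 0}"

lemma csubspace_add: "csubspace M \<Longrightarrow> x \<in> M \<Longrightarrow> y \<in> M \<Longrightarrow> x + y \<in> M"
  by (simp add: csubspace_def)

lemma csubspace_cscale: "csubspace M \<Longrightarrow> x \<in> M \<Longrightarrow> cscale a x \<in> M"
  by (simp add: csubspace_def)

lemma csubspace_scaleR: "csubspace M \<Longrightarrow> x \<in> M \<Longrightarrow> scaleR r x \<in> M"
  by (metis csubspace_cscale cscale_of_real)

lemma csubspace_diff: "csubspace M \<Longrightarrow> x \<in> M \<Longrightarrow> y \<in> M \<Longrightarrow> x - y \<in> M"
  by (metis csubspace_add csubspace_scaleR diff_conv_add_uminus scaleR_minus1_left)

lemma corthogonal_comp_add:
  "u \<in> corthogonal_comp M \<Longrightarrow> v \<in> corthogonal_comp M \<Longrightarrow> u + v \<in> corthogonal_comp M"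
  by (simp add: corthogonal_comp_def cinner_add_right)

lemma corthogonal_comp_diff:
  "u \<in> corthogonal_comp M \<Longrightarrow> v \<in> corthogonal_comp M \<Longrightarrow> u - v \<in> corthogonal_comp M"
  by (simp add: corthogonal_comp_def cinner_diff_right)

lemma corthogonal_comp_cscale: "u \<in> corthogonal_comp M \<Longrightarrow> cscale a u \<in> corthogonal_comp M"
  by (simp add: corthogonal_comp_def cinner_cscale_right)

lemma corthogonal_comp_zero: "0 \<in> corthogonal_comp M"
  by (simp add: corthogonal_comp_def)

lemma in_corthogonal_comp_self: "v \<in> M \<Longrightarrow> v \<in> corthogonal_comp M \<Longrightarrow> v = 0"
  unfolding corthogonal_comp_def using cinner_self_eq_0 by blast

lemma parallelogram_law:
  fixes u v :: "'a::chilbert"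
  shows "(norm (u + v))\<^sup>2 + (norm (u - v))\<^sup>2 = 2 * (norm u)\<^sup>2 + 2 * (norm v)\<^sup>2"
  by (simp add: power2_norm_add power2_norm_diff)

text \<open>If every point of \<open>M\<close> is at distance at least \<open>d\<close> from \<open>x\<close>, then points of \<open>M\<close> that are
almost at distance \<open>d\<close> are close to each other: apply the parallelogram law to \<open>x - a\<close>
and \<open>x - b\<close>, whose half-sum is \<open>x\<close> minus the midpoint of \<open>a\<close> and \<open>b\<close>.\<close>

lemma csubspace_near_points_close:
  assumes M: "csubspace M" and d: "d \<ge> 0" "\<And>m. m \<in> M \<Longrightarrow> d \<le> norm (x - m)"
    and ab: "a \<in> M" "b \<in> M"
  shows "(norm (a - b))\<^sup>2 \<le> 2 * (norm (x - a))\<^sup>2 + 2 * (norm (x - b))\<^sup>2 - 4 * d\<^sup>2"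
proof -
  have "scaleR (1/2) (a + b) \<in> M" using ab M csubspace_add csubspace_scaleR by metis
  hence "2 * d \<le> 2 * norm (x - scaleR (1/2) (a + b))" using d(2) by simp
  also have "\<dots> = norm ((x - a) + (x - b))"
  proof -
    have "(x - a) + (x - b) = 2 *\<^sub>R (x - scaleR (1/2) (a + b))" by (simp add: algebra_simps scaleR_2)
    thus ?thesis by simp
  qed
  finally have "(2 * d)\<^sup>2 \<le> (norm ((x - a) + (x - b)))\<^sup>2" using d(1) by (intro power_mono) auto
  thus ?thesis using parallelogram_law[of "x - a" "x - b"] by (simp add: norm_minus_commute)
qed

lemma minimizing_sequence_Cauchy:
  assumes M: "csubspace M" and d: "d \<ge> 0" "\<And>m. m \<in> M \<Longrightarrow> d \<le> norm (x - m)"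
    and ms: "\<And>k. ms k \<in> M" "\<And>k. (norm (x - ms k))\<^sup>2 < d\<^sup>2 + inverse (real (Suc k))"
  shows "Cauchy ms"
proof (rule CauchyI)
  fix e :: real assume e: "e > 0"
  obtain K :: nat where K: "4 / e\<^sup>2 < real K" using reals_Archimedean2 by blast
  have K0: "real K > 0" using K e by (smt (verit) divide_nonneg_pos zero_less_power)
  have inv: "inverse (real (Suc l)) \<le> 1 / real K" if "l \<ge> K" for l
    using that K0 by (simp add: field_simps)
  have "norm (ms i - ms j) < e" if ij: "i \<ge> K" "j \<ge> K" for i j
  proof -
    have "(norm (ms i - ms j))\<^sup>2 \<le> 2 * (norm (x - ms i))\<^sup>2 + 2 * (norm (x - ms j))\<^sup>2 - 4 * d\<^sup>2"
      by (rule csubspace_near_points_close[OF M d ms(1) ms(1)])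
    also have "\<dots> \<le> 4 / real K" using ms(2)[of i] ms(2)[of j] inv[OF ij(1)] inv[OF ij(2)] by simp
    also have "\<dots> < e\<^sup>2" using K e K0 by (simp add: field_simps)
    finally show ?thesis using e by (simp add: power_less_imp_less_base)
  qed
  thus "\<exists>M. \<forall>m\<ge>M. \<forall>n\<ge>M. norm (ms m - ms n) < e" by blast
qed

lemma closed_csubspace_nearest_point:
  assumes M: "csubspace M" "closed M"
  obtains p where "p \<in> M" "\<And>m. m \<in> M \<Longrightarrow> norm (x - p) \<le> norm (x - m)"
proof -
  define D where "D = (\<lambda>m. norm (x - m)) ` M"
  define d where "d = Inf D"
  have D: "D \<noteq> {}" "bdd_below D" using M by (auto simp: D_def csubspace_def intro: bdd_belowI[of _ 0])
  have d_le: "d \<le> norm (x - m)" if "m \<in> M" for m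
    unfolding d_def using D that by (intro cInf_lower) (auto simp: D_def)
  have d0: "d \<ge> 0" unfolding d_def using D by (intro cInf_greatest) (auto simp: D_def)
  have "\<exists>m\<in>M. (norm (x - m))\<^sup>2 < d\<^sup>2 + inverse (real (Suc k))" for k
  proof -
    have "Inf D < sqrt (d\<^sup>2 + inverse (real (Suc k)))"
      using real_less_rsqrt[of d] by (simp add: d_def)
    then obtain m where m: "m \<in> M" "norm (x - m) < sqrt (d\<^sup>2 + inverse (real (Suc k)))"
      using cInf_less_iff[OF D] by (auto simp: D_def)
    hence "(norm (x - m))\<^sup>2 < (sqrt (d\<^sup>2 + inverse (real (Suc k))))\<^sup>2"
      by (intro power_strict_mono) auto
    also have "\<dots> = d\<^sup>2 + inverse (real (Suc k))" by simp
    finally show ?thesis using m by blast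
  qed
  then obtain ms where ms: "\<And>k. ms k \<in> M" "\<And>k. (norm (x - ms k))\<^sup>2 < d\<^sup>2 + inverse (real (Suc k))"
    by metis
  have "Cauchy ms" by (rule minimizing_sequence_Cauchy[OF M(1) d0 d_le ms])
  then obtain p where p: "ms \<longlonglongrightarrow> p" using Cauchy_convergent_iff convergent_def by blast
  have "(norm (x - p))\<^sup>2 \<le> d\<^sup>2 + 0"
  proof (rule LIMSEQ_le)
    show "(\<lambda>k. (norm (x - ms k))\<^sup>2) \<longlonglongrightarrow> (norm (x - p))\<^sup>2" by (intro tendsto_intros p)
    show "(\<lambda>k. d\<^sup>2 + inverse (real (Suc k))) \<longlonglongrightarrow> d\<^sup>2 + 0"
      by (intro tendsto_intros LIMSEQ_inverse_real_of_nat)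
    show "\<exists>N. \<forall>n\<ge>N. (norm (x - ms n))\<^sup>2 \<le> d\<^sup>2 + inverse (real (Suc n))"
      using ms(2) less_imp_le by blast
  qed
  hence "norm (x - p) \<le> d" using d0 by (simp add: power2_le_iff_abs_le)
  thus ?thesis using that closed_sequentially[OF M(2) ms(1) p] d_le by fastforce
qed

text \<open>Variational characterisation: otherwise moving \<open>p\<close> by a small multiple of \<open>m\<close> towards
\<open>x\<close> would decrease the distance.\<close>

lemma nearest_point_orthogonal:
  assumes M: "csubspace M" and p: "p \<in> M" and nearest: "\<And>m. m \<in> M \<Longrightarrow> norm (x - p) \<le> norm (x - m)"
  shows "x - p \<in> corthogonal_comp M"
  unfolding corthogonal_comp_def mem_Collect_eq
proof
  fix m assume m: "m \<in> M"
  define e where "e = x - p"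
  define c where "c = cinner m e"
  define q where "q = (cmod c)\<^sup>2"
  define s where "s = 1 / ((norm m)\<^sup>2 + 1)"
  have pos: "(norm m)\<^sup>2 + 1 > 0" using zero_le_power2[of "norm m"] by linarith
  have s: "s > 0" using pos by (simp add: s_def)
  have sm: "s * (norm m)\<^sup>2 \<le> 1" using pos by (simp add: s_def field_simps)
  define t where "t = of_real s * c"
  have "p + cscale t m \<in> M" using p m M csubspace_add csubspace_cscale by metis
  hence "(norm e)\<^sup>2 \<le> (norm (e - cscale t m))\<^sup>2"
    using nearest by (simp add: e_def algebra_simps power_mono)
  also have "\<dots> = (norm e)\<^sup>2 + (norm (cscale t m))\<^sup>2 - 2 * Re (cinner e (cscale t m))"
    by (rule power2_norm_diff)
  also have "norm (cscale t m) = s * cmod c * norm m"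
    using s by (simp add: norm_cscale t_def norm_mult)
  also have "cinner e (cscale t m) = of_real s * (c * cnj c)"
    by (simp add: cinner_cscale_right t_def c_def cinner_cnj[of e m] mult.assoc)
  also have "Re (of_real s * (c * cnj c)) = s * q"
    by (simp add: q_def complex_mult_cnj cmod_power2)
  finally have "0 \<le> s * (s * (norm m)\<^sup>2 * q - 2 * q)"
    by (simp add: q_def algebra_simps power2_eq_square)
  hence "0 \<le> s * (norm m)\<^sup>2 * q - 2 * q" using s by (simp add: zero_le_mult_iff)
  moreover have "s * (norm m)\<^sup>2 * q \<le> q" using sm mult_right_mono[OF sm, of q] by (simp add: q_def)
  moreover have "q \<ge> 0" by (simp add: q_def)
  ultimately have "q = 0" by linarith
  thus "cinner m (x - p) = 0" by (simp add: q_def c_def e_def)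
qed

definition cproj :: "'a::chilbert set \<Rightarrow> 'a \<Rightarrow> 'a" where
  "cproj M x = (SOME p. p \<in> M \<and> x - p \<in> corthogonal_comp M)"

lemma cproj:
  assumes "csubspace M" "closed M"
  shows "cproj M x \<in> M" "x - cproj M x \<in> corthogonal_comp M"
proof -
  obtain p where "p \<in> M" "\<And>m. m \<in> M \<Longrightarrow> norm (x - p) \<le> norm (x - m)"
    using closed_csubspace_nearest_point[OF assms] by blast
  hence "\<exists>p. p \<in> M \<and> x - p \<in> corthogonal_comp M" using nearest_point_orthogonal[OF assms(1)] by blast
  hence "cproj M x \<in> M \<and> x - cproj M x \<in> corthogonal_comp M"
    unfolding cproj_def by (rule someI_ex)
  thus "cproj M x \<in> M" "x - cproj M x \<in> corthogonal_comp M" by simp_all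
qed

lemma cproj_unique:
  assumes M: "csubspace M" "closed M" and p: "p \<in> M" "x - p \<in> corthogonal_comp M"
  shows "cproj M x = p"
proof -
  have "cproj M x - p \<in> M" using csubspace_diff[OF M(1) cproj(1)[OF M] p(1)] .
  moreover have "(x - p) - (x - cproj M x) \<in> corthogonal_comp M"
    using corthogonal_comp_diff[OF p(2) cproj(2)[OF M]] .
  ultimately show ?thesis using in_corthogonal_comp_self by fastforce
qed

lemma cproj_add: "csubspace M \<Longrightarrow> closed M \<Longrightarrow> cproj M (x + y) = cproj M x + cproj M y"
  by (rule cproj_unique)
    (auto simp: csubspace_add cproj
      corthogonal_comp_add[of "x - cproj M x" M "y - cproj M y", simplified algebra_simps] algebra_simps)

lemma cproj_cscale: "csubspace M \<Longrightarrow> closed M \<Longrightarrow> cproj M (cscale a x) = cscale a (cproj M x)"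
  by (rule cproj_unique) (auto simp: csubspace_cscale cproj corthogonal_comp_cscale cscale_diff_right[symmetric])

lemma cproj_id: "csubspace M \<Longrightarrow> closed M \<Longrightarrow> m \<in> M \<Longrightarrow> cproj M m = m"
  by (rule cproj_unique) (auto simp: corthogonal_comp_zero)

lemma cinner_cproj_residual:
  assumes "csubspace M" "closed M"
  shows "cinner (x - cproj M x) y = cinner x (y - cproj M y)"
proof -
  have "cinner (x - cproj M x) (cproj M y) = 0"
    using cproj[OF assms] by (simp add: corthogonal_comp_def cinner_eq_zero_commute)
  moreover have "cinner (cproj M x) (y - cproj M y) = 0"
    using cproj[OF assms] by (simp add: corthogonal_comp_def)
  ultimately show ?thesis by (simp add: cinner_diff_left cinner_diff_right)
qed

lemma cinner_cproj: "csubspace M \<Longrightarrow> closed M \<Longrightarrow> cinner (cproj M x) y = cinner x (cproj M y)"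
  using cinner_cproj_residual[of M x y] by (simp add: cinner_diff_left cinner_diff_right)

lemma norm_cproj_le:
  assumes "csubspace M" "closed M"
  shows "norm (cproj M x) \<le> norm x" "norm (x - cproj M x) \<le> norm x"
proof -
  have "cinner (cproj M x) (x - cproj M x) = 0" using cproj[OF assms, of x] by (simp add: corthogonal_comp_def)
  hence pythagoras: "(norm x)\<^sup>2 = (norm (cproj M x))\<^sup>2 + (norm (x - cproj M x))\<^sup>2"
    using power2_norm_add[of "cproj M x" "x - cproj M x"] by simp
  thus "norm (cproj M x) \<le> norm x"
    by (metis le_add_same_cancel1 norm_ge_zero power2_le_imp_le zero_le_power2)
  from pythagoras show "norm (x - cproj M x) \<le> norm x"
    by (metis le_add_same_cancel2 norm_ge_zero power2_le_imp_le zero_le_power2)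
qed

section \<open>The adjoint\<close>

lemma riesz_representation:
  fixes f :: "'a::chilbert \<Rightarrow> complex"
  assumes add: "\<And>x y. f (x + y) = f x + f y" and scale: "\<And>a x. f (cscale a x) = a * f x"
    and bound: "\<And>x. cmod (f x) \<le> norm x * K"
  shows "\<exists>z. \<forall>x. f x = cinner z x"
proof (cases "\<forall>x. f x = 0")
  case True thus ?thesis by (intro exI[of _ 0]) simp
next
  case False
  then obtain x0 where x0: "f x0 \<noteq> 0" by blast
  have bl: "bounded_linear f"
    by (metis add scale bound bounded_linear_intro cscale_of_real scaleR_conv_of_real)
  have L: "linear f" using bl bounded_linear.linear by blast
  define N where "N = {x. f x = 0}"
  have "csubspace N" using linear_0[OF L] add scale by (simp add: csubspace_def N_def)
  moreover have "closed N"
    using continuous_closed_vimage[OF closed_singleton linear_continuous_at[OF bl]]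
    by (simp add: N_def vimage_def)
  ultimately have proj: "cproj N x0 \<in> N" "x0 - cproj N x0 \<in> corthogonal_comp N"
    by (rule cproj)+
  \<comment> \<open>\<open>w\<close> spans the orthogonal complement of the kernel of \<open>f\<close>\<close>
  define w where "w = x0 - cproj N x0"
  have w_orth: "w \<in> corthogonal_comp N" using proj by (simp add: w_def)
  have fw: "f w = f x0" using proj linear_diff[OF L] by (simp add: w_def N_def)
  have w0: "cinner w w \<noteq> 0" using fw x0 linear_0[OF L] by auto
  have key: "cinner w x = (f x / f w) * cinner w w" for x
  proof -
    define v where "v = x - cscale (f x / f w) w"
    have "f v = 0" using fw x0 linear_diff[OF L] by (simp add: v_def scale)
    hence "cinner w v = 0" using w_orth by (simp add: corthogonal_comp_def N_def cinner_eq_zero_commute)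
    thus ?thesis by (simp add: v_def cinner_diff_right cinner_cscale_right)
  qed
  have "f x = cinner (cscale (cnj (f w / cinner w w)) w) x" for x
    using key[of x] w0 fw x0 by (simp add: cinner_cscale_left field_simps)
  thus ?thesis by blast
qed

lemma adjoint_exists:
  assumes "bounded_clinear T"
  obtains S where "\<And>x y. cinner (T x) y = cinner x (S y)"
proof -
  obtain K where b: "\<And>x. norm (T x) \<le> norm x * K"
    using assms unfolding bounded_clinear_def by blast
  have "\<exists>z. \<forall>x. cinner (T x) y = cinner x z" for y
  proof -
    have "\<exists>z. \<forall>x. cinner y (T x) = cinner z x"
    proof (rule riesz_representation)
      show "cinner y (T (x1 + x2)) = cinner y (T x1) + cinner y (T x2)" for x1 x2
        by (simp add: bounded_clinear_add[OF assms] cinner_add_right)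
      show "cinner y (T (cscale a x)) = a * cinner y (T x)" for a x
        by (simp add: bounded_clinear_cscale[OF assms] cinner_cscale_right)
      show "cmod (cinner y (T x)) \<le> norm x * (norm y * K)" for x
      proof -
        have "cmod (cinner y (T x)) \<le> norm y * norm (T x)" by (rule cauchy_schwarz)
        also have "\<dots> \<le> norm y * (norm x * K)" using b by (intro mult_left_mono) auto
        finally show ?thesis by (simp add: algebra_simps)
      qed
    qed
    thus ?thesis by (metis cinner_cnj)
  qed
  thus ?thesis using that by metis
qed

lemma adj_eqI:
  assumes "\<And>x y. cinner (T x) y = cinner x (S y)"
  shows "adj T = S"
  unfolding adj_def
proof (rule the_equality)
  fix S' assume "\<forall>x y. cinner (T x) y = cinner x (S' y)"
  thus "S' = S" using assms by (intro ext cinner_ext) metis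
qed (use assms in blast)

lemma cinner_adj: "bounded_clinear T \<Longrightarrow> cinner (T x) y = cinner x (adj T y)"
  by (metis adjoint_exists adj_eqI)

section \<open>The Moore--Penrose inverse\<close>

text \<open>The four Penrose equations, pointwise, with self-adjointness of \<open>S \<circ> T\<close> and \<open>T \<circ> S\<close>
expressed through the inner product instead of \<open>adj\<close>.\<close>

definition penrose_inverse :: "('a::chilbert \<Rightarrow> 'a) \<Rightarrow> ('a \<Rightarrow> 'a) \<Rightarrow> bool" where
  "penrose_inverse T S \<longleftrightarrow>
     (\<forall>x. T (S (T x)) = T x) \<and> (\<forall>y. S (T (S y)) = S y) \<and>
     (\<forall>x y. cinner (S (T x)) y = cinner x (S (T y))) \<and>
     (\<forall>x y. cinner (T (S x)) y = cinner x (T (S y)))"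

lemma penrose_inverse_unique:
  assumes S: "penrose_inverse T S" and S': "penrose_inverse T S'"
  shows "S = S'"
proof -
  have t1: "\<And>x. T (S (T x)) = T x" and t2: "\<And>y. S (T (S y)) = S y"
    and t3: "\<And>x y. cinner (S (T x)) y = cinner x (S (T y))"
    and t4: "\<And>x y. cinner (T (S x)) y = cinner x (T (S y))"
    using S by (simp_all add: penrose_inverse_def)
  have u1: "\<And>x. T (S' (T x)) = T x" and u2: "\<And>y. S' (T (S' y)) = S' y"
    and u3: "\<And>x y. cinner (S' (T x)) y = cinner x (S' (T y))"
    and u4: "\<And>x y. cinner (T (S' x)) y = cinner x (T (S' y))"
    using S' by (simp_all add: penrose_inverse_def)
  have ST: "S (T y) = S' (T y)" for y
  proof (rule cinner_ext)
    fix x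
    have "cinner x (S (T y)) = cinner (S (T (S' (T x)))) y" by (simp add: t3 u1)
    also have "\<dots> = cinner x (S' (T (S (T y))))" by (simp only: t3 u3)
    finally show "cinner x (S (T y)) = cinner x (S' (T y))" by (simp add: t1)
  qed
  have TS: "T (S y) = T (S' y)" for y
  proof (rule cinner_ext)
    fix x
    have "cinner x (T (S' y)) = cinner x (T (S (T (S' y))))" by (simp add: t1)
    also have "\<dots> = cinner (T (S' (T (S x)))) y" by (simp only: t4 u4)
    also have "\<dots> = cinner x (T (S y))" by (simp add: u1 t4)
    finally show "cinner x (T (S y)) = cinner x (T (S' y))" by simp
  qed
  show ?thesis
  proof
    fix y
    have "S y = S (T (S' y))" by (simp add: t2 flip: TS)
    also have "\<dots> = S' y" by (simp add: ST u2)
    finally show "S y = S' y" .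
  qed
qed

lemma penrose_inverse_iff_penrose_equations:
  assumes T: "bounded_clinear T" and S: "bounded_clinear S"
  shows "penrose_inverse T S \<longleftrightarrow>
    T \<circ> S \<circ> T = T \<and> S \<circ> T \<circ> S = S \<and> adj (S \<circ> T) = S \<circ> T \<and> adj (T \<circ> S) = T \<circ> S"
proof
  assume P: "penrose_inverse T S"
  hence "adj (S \<circ> T) = S \<circ> T" "adj (T \<circ> S) = T \<circ> S"
    by (auto simp: penrose_inverse_def intro!: adj_eqI)
  with P show "T \<circ> S \<circ> T = T \<and> S \<circ> T \<circ> S = S \<and> adj (S \<circ> T) = S \<circ> T \<and> adj (T \<circ> S) = T \<circ> S"
    by (simp add: penrose_inverse_def fun_eq_iff)
next
  assume eqs: "T \<circ> S \<circ> T = T \<and> S \<circ> T \<circ> S = S \<and> adj (S \<circ> T) = S \<circ> T \<and> adj (T \<circ> S) = T \<circ> S"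
  have "cinner (S (T x)) y = cinner x (S (T y))" for x y
    using cinner_adj[OF bounded_clinear_compose[OF S T], of x y] eqs by simp
  moreover have "cinner (T (S x)) y = cinner x (T (S y))" for x y
    using cinner_adj[OF bounded_clinear_compose[OF T S], of x y] eqs by simp
  ultimately show "penrose_inverse T S"
    using eqs unfolding penrose_inverse_def by (simp add: fun_eq_iff)
qed

lemma mp_inv_eqI:
  assumes "bounded_clinear T" "bounded_clinear S" "penrose_inverse T S"
  shows "mp_inv T = S"
  unfolding mp_inv_def
proof (rule the_equality)
  show "bounded_clinear S \<and> T \<circ> S \<circ> T = T \<and> S \<circ> T \<circ> S = S \<and>
      adj (S \<circ> T) = S \<circ> T \<and> adj (T \<circ> S) = T \<circ> S"
    using assms penrose_inverse_iff_penrose_equations by blast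
  fix S' assume "bounded_clinear S' \<and> T \<circ> S' \<circ> T = T \<and> S' \<circ> T \<circ> S' = S' \<and>
      adj (S' \<circ> T) = S' \<circ> T \<and> adj (T \<circ> S') = T \<circ> S'"
  hence "penrose_inverse T S'" using penrose_inverse_iff_penrose_equations[OF assms(1)] by blast
  thus "S' = S" using penrose_inverse_unique assms(3) by blast
qed

locale closed_range_operator =
  fixes T :: "'a::chilbert \<Rightarrow> 'a"
  assumes bounded: "bounded_clinear T" and closed_range: "closed (range T)"
begin

definition ker :: "'a set" where "ker = {x. T x = 0}"

definition pinv :: "'a \<Rightarrow> 'a" where
  "pinv y = (SOME u. u \<in> corthogonal_comp ker \<and> T u = cproj (range T) y)"

lemma csubspace_ker: "csubspace ker"
  by (simp add: csubspace_def ker_def bounded_clinear_add[OF bounded]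
      bounded_clinear_cscale[OF bounded] bounded_clinear_zero[OF bounded])

lemma closed_ker: "closed ker"
proof -
  have "ker = T -` {0}" by (auto simp: ker_def)
  thus ?thesis
    using continuous_closed_vimage[OF closed_singleton
        linear_continuous_at[OF bounded_clinear_imp_bounded_linear[OF bounded]]]
    by simp
qed

lemma csubspace_range: "csubspace (range T)"
  unfolding csubspace_def
proof (intro conjI ballI allI)
  show "0 \<in> range T" using bounded_clinear_zero[OF bounded] by (metis rangeI)
  show "x + y \<in> range T" if "x \<in> range T" "y \<in> range T" for x y
    using that by (auto simp: bounded_clinear_add[OF bounded, symmetric])
  show "cscale a x \<in> range T" if "x \<in> range T" for a x
    using that by (auto simp: bounded_clinear_cscale[OF bounded, symmetric])
qed

lemmas cproj_ker = cproj[OF csubspace_ker closed_ker]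
  and cproj_range = cproj[OF csubspace_range closed_range]

lemma T_residual_ker: "T (x - cproj ker x) = T x"
  using cproj_ker(1) by (simp add: ker_def bounded_clinear_diff[OF bounded])

lemma injective_on_corthogonal_ker:
  assumes "u \<in> corthogonal_comp ker" "v \<in> corthogonal_comp ker" "T u = T v"
  shows "u = v"
proof -
  have "u - v \<in> ker" using assms(3) by (simp add: ker_def bounded_clinear_diff[OF bounded])
  thus ?thesis using corthogonal_comp_diff[OF assms(1,2)] in_corthogonal_comp_self by fastforce
qed

lemma pinv: "pinv y \<in> corthogonal_comp ker" "T (pinv y) = cproj (range T) y"
proof -
  obtain x where x: "cproj (range T) y = T x" using cproj_range(1) by blast
  hence "\<exists>u. u \<in> corthogonal_comp ker \<and> T u = cproj (range T) y"
    by (intro exI[of _ "x - cproj ker x"]) (simp add: cproj_ker T_residual_ker)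
  hence "pinv y \<in> corthogonal_comp ker \<and> T (pinv y) = cproj (range T) y"
    unfolding pinv_def by (rule someI_ex)
  thus "pinv y \<in> corthogonal_comp ker" "T (pinv y) = cproj (range T) y" by simp_all
qed

lemma pinv_eqI: "u \<in> corthogonal_comp ker \<Longrightarrow> T u = cproj (range T) y \<Longrightarrow> pinv y = u"
  using injective_on_corthogonal_ker[OF pinv(1)] pinv(2) by simp

lemma pinv_T: "pinv (T x) = x - cproj ker x"
  by (rule pinv_eqI) (simp_all add: cproj_ker T_residual_ker cproj_id[OF csubspace_range closed_range])

lemma bounded_clinear_pinv: "bounded_clinear pinv"
proof -
  obtain C where C: "\<And>y. y \<in> range T \<Longrightarrow> \<exists>x. T x = y \<and> norm x \<le> C * norm y"
    using closed_range_bounded_preimages[OF bounded_clinear_imp_bounded_linear[OF bounded] closed_range]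
    by blast
  have "pinv (y1 + y2) = pinv y1 + pinv y2" for y1 y2
    by (rule pinv_eqI) (simp_all add: pinv corthogonal_comp_add bounded_clinear_add[OF bounded]
        cproj_add[OF csubspace_range closed_range])
  moreover have "pinv (cscale a y) = cscale a (pinv y)" for a y
    by (rule pinv_eqI) (simp_all add: pinv corthogonal_comp_cscale bounded_clinear_cscale[OF bounded]
        cproj_cscale[OF csubspace_range closed_range])
  moreover have "norm (pinv y) \<le> norm y * max C 0" for y
  proof -
    obtain x where x: "T x = cproj (range T) y" "norm x \<le> C * norm (cproj (range T) y)"
      using C cproj_range(1) by blast
    have "pinv y = x - cproj ker x"
      by (rule pinv_eqI) (simp_all add: cproj_ker T_residual_ker x(1))
    hence "norm (pinv y) \<le> norm x" using norm_cproj_le[OF csubspace_ker closed_ker] by simp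
    also have "\<dots> \<le> max C 0 * norm (cproj (range T) y)"
      using x(2) by (smt (verit) max.cobounded1 mult_right_mono norm_ge_zero)
    also have "\<dots> \<le> max C 0 * norm y"
      using norm_cproj_le[OF csubspace_range closed_range] by (intro mult_left_mono) auto
    finally show ?thesis by (simp add: mult.commute)
  qed
  ultimately show ?thesis unfolding bounded_clinear_def by blast
qed

lemma penrose_inverse_pinv: "penrose_inverse T pinv"
  unfolding penrose_inverse_def
proof (intro conjI allI)
  show "T (pinv (T x)) = T x" for x by (simp add: pinv_T T_residual_ker)
  show "pinv (T (pinv y)) = pinv y" for y
    by (rule pinv_eqI) (simp_all add: pinv cproj_id[OF csubspace_range closed_range] cproj_range)
  show "cinner (pinv (T x)) y = cinner x (pinv (T y))" for x y
    by (simp add: pinv_T cinner_cproj_residual[OF csubspace_ker closed_ker])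
  show "cinner (T (pinv x)) y = cinner x (T (pinv y))" for x y
    by (simp add: pinv cinner_cproj[OF csubspace_range closed_range])
qed

end

lemma closed_range_penrose_inverse_exists:
  assumes "bounded_clinear T" "closed (range T)"
  obtains S where "bounded_clinear S" "penrose_inverse T S"
proof -
  interpret closed_range_operator T using assms by unfold_locales
  show ?thesis using that bounded_clinear_pinv penrose_inverse_pinv by blast
qed

section \<open>Commutation with the Moore--Penrose inverse\<close>

context
  fixes T S A :: "'a::chilbert \<Rightarrow> 'a"
  assumes T: "bounded_clinear T" and S: "bounded_clinear S" and A: "bounded_clinear A"
    and penrose: "penrose_inverse T S"
    and A_T: "\<And>x. A (T x) = T (A x)" and A_adj: "\<And>x. A (adj T x) = adj T (A x)"
begin

lemma penrose_inverse_commute_range_proj: "T (S (A z)) = A (T (S z))"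
proof -
  have TST: "\<And>x. T (S (T x)) = T x" and TS_sym: "\<And>x y. cinner (T (S x)) y = cinner x (T (S y))"
    using penrose by (simp_all add: penrose_inverse_def)
  have TS_adj_kernel: "T (S w) = 0" if "adj T w = 0" for w
  proof -
    have "cinner (T (S w)) (T (S w)) = cinner w (T (S (T (S w))))" by (rule TS_sym)
    also have "\<dots> = cnj (cinner (T (S w)) w)" by (simp add: TST flip: cinner_cnj)
    also have "cinner (T (S w)) w = cinner (S w) (adj T w)" by (rule cinner_adj[OF T])
    finally show ?thesis using that by simp
  qed
  \<comment> \<open>split \<open>z\<close> into its component \<open>T (S z)\<close> in the range of \<open>T\<close> and a remainder \<open>w\<close> in
    the kernel of the adjoint\<close>
  define w where "w = z - T (S z)"
  have "adj T w = 0"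
  proof (rule cinner_ext)
    fix x
    have "cinner (T x) (T (S z)) = cinner (T x) z" by (simp add: TST flip: TS_sym)
    thus "cinner x (adj T w) = cinner x 0"
      by (simp add: w_def cinner_diff_right flip: cinner_adj[OF T])
  qed
  hence "T (S (A w)) = 0"
    by (simp add: TS_adj_kernel bounded_clinear_zero[OF A] flip: A_adj)
  moreover have "A z = T (A (S z)) + A w"
    by (simp add: w_def A_T bounded_clinear_diff[OF A])
  ultimately show ?thesis
    by (simp add: TST A_T bounded_clinear_add[OF S] bounded_clinear_add[OF T])
qed

lemma penrose_inverse_commute_domain_proj: "S (T (A x)) = A (S (T x))"
proof -
  have TST: "\<And>x. T (S (T x)) = T x" and ST_sym: "\<And>x y. cinner (S (T x)) y = cinner x (S (T y))"
    using penrose by (simp_all add: penrose_inverse_def)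
  have ST_adj: "S (T (adj T v)) = adj T v" for v
  proof (rule cinner_ext)
    fix z
    have "cinner z (S (T (adj T v))) = cinner (T (S (T z))) v"
      by (simp add: cinner_adj[OF T] flip: ST_sym)
    also have "\<dots> = cinner z (adj T v)" by (simp add: TST cinner_adj[OF T])
    finally show "cinner z (S (T (adj T v))) = cinner z (adj T v)" .
  qed
  \<comment> \<open>\<open>S (T x)\<close> lies in the range of the adjoint, and \<open>x - S (T x)\<close> in the kernel of \<open>T\<close>\<close>
  have ST_eq: "S (T x) = adj T (adj S x)"
  proof (rule cinner_ext)
    fix z
    have "cinner z (S (T x)) = cinner (T z) (adj S x)" by (simp add: cinner_adj[OF S] flip: ST_sym)
    thus "cinner z (S (T x)) = cinner z (adj T (adj S x))" by (simp add: cinner_adj[OF T])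
  qed
  have "T (A (x - S (T x))) = 0"
    by (simp add: TST bounded_clinear_diff[OF T] bounded_clinear_zero[OF A] flip: A_T)
  hence "S (T (A x)) = S (T (A (S (T x))))"
    by (simp add: bounded_clinear_diff[OF A] bounded_clinear_diff[OF T] bounded_clinear_diff[OF S])
  also have "\<dots> = A (S (T x))"
    by (simp add: ST_eq A_adj ST_adj)
  finally show ?thesis .
qed

lemma penrose_inverse_commute: "A (S y) = S (A y)"
proof -
  have STS: "\<And>x. S (T (S x)) = S x" using penrose by (simp add: penrose_inverse_def)
  have "A (S y) = A (S (T (S y)))" by (simp add: STS)
  also have "\<dots> = S (T (A (S y)))" by (simp add: penrose_inverse_commute_domain_proj)
  also have "\<dots> = S (T (S (A y)))" by (simp add: A_T penrose_inverse_commute_range_proj)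
  also have "\<dots> = S (A y)" by (rule STS)
  finally show ?thesis .
qed

end

theorem mainTheorem9:
  fixes T :: "'a::chilbert \<Rightarrow> 'a" and n :: nat
  assumes "n \<ge> 1"
    and "bounded_clinear T"
    and "n_normal n T"
    and "closed (range T)"
  shows "n_EP n T"
proof -
  obtain S where S: "bounded_clinear S" "penrose_inverse T S"
    using closed_range_penrose_inverse_exists[OF assms(2,4)] by blast
  have "(T ^^ n) (S y) = S ((T ^^ n) y)" for y
  proof (rule penrose_inverse_commute[OF assms(2) S(1) bounded_clinear_funpow[OF assms(2)] S(2)])
    show "(T ^^ n) (T x) = T ((T ^^ n) x)" for x
      by (simp add: funpow_swap1)
    show "(T ^^ n) (adj T x) = adj T ((T ^^ n) x)" for x
      using assms(3) by (simp add: n_normal_def fun_eq_iff)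
  qed
  thus ?thesis
    using assms(4) by (simp add: n_EP_def fun_eq_iff mp_inv_eqI[OF assms(2) S])
qed

end
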